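(* Let $\{\omega_n\}_{n\ge1}$ be a KP integrable system of differentials on $\Sigma$ with kernel $K$. Let $m,n\ge1$ and let $$Z=(p_1,\dots,p_m,\bar p_1,\dots,\bar p_{m-1},p'_1,\dots,p'_{n-1},\bar p'_1,\dots,\bar p'_n)$$ be a collection of $2m+2n-2$ pairwise distinct points of $\Sigma$ at which $K$ is regular (away from the diagonal). Then $$\sum_{q\in Z}\operatorname*{res}_{z=q}\ \Omega^\bullet_m(p_1,\dots,p_m;\bar p_1,\dots,\bar p_{m-1},z)\,\Omega^\bullet_n(p'_1,\dots,p'_{n-1},z;\bar p'_1,\dots,\bar p'_n)=0 .$$
   Context: Let $\Sigma$ be a (not necessarily compact) Riemann surface. A system $\{\omega_n\}_{n\ge1}$ of symmetric meromorphic $n$-differentials on $\Sigma$ (or formal power series in a parameter $\hbar$ whose coefficients are such) is called KP integrable if there is a bi-halfdifferential $K(p_1,p_2)$ on $\Sigma^2$ (a section of a square root of the canonical bundle in each argument; meromorphic, or an $\hbar$-series with meromorphic coefficients) which near the diagonal has the form $K(p_1,p_2)=\big(\frac{1}{z_1-z_2}+\text{holomorphic}\big)\sqrt{dz_1}\sqrt{dz_2}$, $z_i=z(p_i)$, for a local coordinate $z$, such that $\omega_1(p_1)=\lim_{p_2\to p_1}\big(K(p_1,p_2)-\frac{\sqrt{dz_1}\sqrt{dz_2}}{z_1-z_2}\big)$ and $\omega_n(p_1,\dots,p_n)=\det^\circ\|K(p_i,p_j)\|_{i,j=1}^n$ for $n\ge2$. Here for an $n\times n$ matrix, the connected determinant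 is $\det^\circ(A_{ij})=(-1)^{n-1}\sum_{\sigma}\prod_{i=1}^nA_{i,\sigma(i)}$, the sum over all permutations $\sigma\in\mathfrak S_n$ that are cycles of length $n$. For such a system and $N\ge1$ we write $\Omega^\bullet_N(p^+_1,\dots,p^+_N;p^-_1,\dots,p^-_N)=\det\|K(p^+_i,p^-_j)\|_{i,j=1}^N$ (the arguments before the semicolon are the $p^+$'s, those after it the $p^-$'s). The product under the residue is a meromorphic $1$-differential in $z$. *)

theory Defs
  imports "HOL-Complex_Analysis.Complex_Analysis"
          "HOL-Computational_Algebra.Formal_Power_Series"
begin

type_synonym 'p chart = "'p set \<times> ('p \<Rightarrow> complex)"

definition is_chart :: "'p::topological_space chart \<Rightarrow> bool" where
  "is_chart c \<longleftrightarrow> open (fst c) \<and> open (snd c ` fst c) \<and>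
     homeomorphism (fst c) (snd c ` fst c) (snd c) (inv_into (fst c) (snd c))"

definition transition :: "'p chart \<Rightarrow> 'p chart \<Rightarrow> complex \<Rightarrow> complex" where
  "transition c d = snd d \<circ> inv_into (fst c) (snd c)"

definition riemann_surface_atlas :: "'p::t2_space chart set \<Rightarrow> bool" where
  "riemann_surface_atlas A \<longleftrightarrow>
     connected (UNIV :: 'p set) \<and>
     (\<forall>c\<in>A. is_chart c) \<and> (\<Union>c\<in>A. fst c) = UNIV \<and>
     (\<forall>c\<in>A. \<forall>d\<in>A. transition c d holomorphic_on (snd c ` (fst c \<inter> fst d)))"

text \<open>A square root of the canonical bundle, trivialised over the charts of A:
  s c d p = sqrt(d z_d / d z_c) at p, a continuous choice of square roots of the
  derivatives of the transition maps satisfying the cocycle condition.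
  A local expression f_c of a half-differential (f_c(z_c) sqrt(dz_c)) transforms as
  f_c = s c d * f_d.\<close>
definition spin_structure :: "'p::t2_space chart set \<Rightarrow> ('p chart \<Rightarrow> 'p chart \<Rightarrow> 'p \<Rightarrow> complex) \<Rightarrow> bool" where
  "spin_structure A s \<longleftrightarrow>
     (\<forall>c\<in>A. \<forall>d\<in>A. continuous_on (fst c \<inter> fst d) (s c d) \<and>
        (\<forall>p\<in>fst c \<inter> fst d. (s c d p)\<^sup>2 = deriv (transition c d) (snd c p))) \<and>
     (\<forall>c\<in>A. \<forall>d\<in>A. \<forall>e\<in>A. \<forall>p\<in>fst c \<inter> fst d \<inter> fst e. s c e p = s c d p * s d e p)"

definition holo2 :: "(complex \<Rightarrow> complex \<Rightarrow> complex) \<Rightarrow> (complex \<times> complex) set \<Rightarrow> bool" where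
  "holo2 f W \<longleftrightarrow> open W \<and> continuous_on W (\<lambda>(x, y). f x y) \<and>
     (\<forall>(x, y)\<in>W. (\<lambda>x'. f x' y) field_differentiable at x \<and>
                  (\<lambda>y'. f x y') field_differentiable at y)"

definition regular2_at :: "(complex \<Rightarrow> complex \<Rightarrow> complex) \<Rightarrow> complex \<times> complex \<Rightarrow> bool" where
  "regular2_at f z \<longleftrightarrow> (\<exists>W. z \<in> W \<and> holo2 f W)"

definition mero2 :: "(complex \<Rightarrow> complex \<Rightarrow> complex) \<Rightarrow> (complex \<times> complex) set \<Rightarrow> bool" where
  "mero2 f S \<longleftrightarrow> open S \<and>
     (\<forall>z\<in>S. \<exists>W g h. z \<in> W \<and> W \<subseteq> S \<and> holo2 g W \<and> holo2 h W \<and>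
        (\<forall>w\<in>W. \<forall>e>0. \<exists>w'\<in>ball w e. h (fst w') (snd w') \<noteq> 0) \<and>
        (\<forall>(x, y)\<in>W. h x y \<noteq> 0 \<longrightarrow> f x y = g x y / h x y))"

text \<open>A bi-halfdifferential on the surface, given by its local expressions
  K c d z1 z2 in pairs of charts (c for the first, d for the second argument).
  Values are formal power series in hbar (fps_nth _ k is the coefficient of hbar^k);
  the purely meromorphic case is the case of constant series.\<close>
definition KP_kernel :: "'p::t2_space chart set \<Rightarrow> ('p chart \<Rightarrow> 'p chart \<Rightarrow> 'p \<Rightarrow> complex)
     \<Rightarrow> ('p chart \<Rightarrow> 'p chart \<Rightarrow> complex \<Rightarrow> complex \<Rightarrow> complex fps) \<Rightarrow> bool" where
  "KP_kernel A s K \<longleftrightarrow>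
     (\<forall>c\<in>A. \<forall>d\<in>A. \<forall>k. mero2 (\<lambda>w1 w2. fps_nth (K c d w1 w2) k) (snd c ` fst c \<times> snd d ` fst d)) \<and>
     (\<forall>c\<in>A. \<forall>c'\<in>A. \<forall>d\<in>A. \<forall>d'\<in>A. \<forall>p1\<in>fst c \<inter> fst c'. \<forall>p2\<in>fst d \<inter> fst d'.
        K c d (snd c p1) (snd d p2) = fps_const (s c c' p1 * s d d' p2) * K c' d' (snd c' p1) (snd d' p2)) \<and>
     (\<forall>c\<in>A. \<forall>p\<in>fst c. \<forall>k. \<exists>W h. (snd c p, snd c p) \<in> W \<and> holo2 h W \<and>
        (\<forall>(w1, w2)\<in>W. w1 \<noteq> w2 \<longrightarrow>
           fps_nth (K c c w1 w2) k = (if k = 0 then 1 / (w1 - w2) else 0) + h w1 w2))"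

definition detN :: "nat \<Rightarrow> (nat \<Rightarrow> nat \<Rightarrow> 'a::comm_ring_1) \<Rightarrow> 'a" where
  "detN N M = (\<Sum>\<sigma> | \<sigma> permutes {..<N}. of_int (sign \<sigma>) * (\<Prod>i<N. M i (\<sigma> i)))"

text \<open>Local expression of Omega^bullet_N(P_1..P_N; M_1..M_N) = det K(P_i, M_j), where
  every argument is given as (chart, coordinate of the point in that chart).\<close>
definition Omega_loc :: "('p chart \<Rightarrow> 'p chart \<Rightarrow> complex \<Rightarrow> complex \<Rightarrow> complex fps) \<Rightarrow> nat
     \<Rightarrow> (nat \<Rightarrow> 'p chart \<times> complex) \<Rightarrow> (nat \<Rightarrow> 'p chart \<times> complex) \<Rightarrow> complex fps" where
  "Omega_loc K N P M = detN N (\<lambda>i j. K (fst (P i)) (fst (M j)) (snd (P i)) (snd (M j)))"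

definition at_pt :: "('p \<Rightarrow> 'p chart) \<Rightarrow> 'p \<Rightarrow> 'p chart \<times> complex" where
  "at_pt ch p = (ch p, snd (ch p) p)"

definition fps_residue :: "(complex \<Rightarrow> complex fps) \<Rightarrow> complex \<Rightarrow> complex fps" where
  "fps_residue F z = Abs_fps (\<lambda>k. residue (\<lambda>w. fps_nth (F w) k) z)"

end

theory Submission
  imports Defs "Jordan_Normal_Form.Determinant"
begin

text \<open>Expanding the first determinant along its last column and the second one along its last
  row writes the integrand as \<open>(\<Sum>\<^sub>i \<alpha>\<^sub>i K(P i, z)) (\<Sum>\<^sub>j \<beta>\<^sub>j K(z, Pb' j))\<close> with coefficients
  independent of \<open>z\<close>. As \<open>K\<close> is regular off the diagonal and has the simple pole
  \<open>1/(z\<^sub>1 - z\<^sub>2)\<close> on it, the residue vanishes at all points except at \<open>P i\<close>, where it is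
  \<open>-\<alpha>\<^sub>i \<Sum>\<^sub>j \<beta>\<^sub>j K(P i, Pb' j)\<close>, and at \<open>Pb' j\<close>, where it is \<open>\<beta>\<^sub>j \<Sum>\<^sub>i \<alpha>\<^sub>i K(P i, Pb' j)\<close>;
  these contributions cancel.\<close>

unbundle no vec_syntax
no_notation vec_index (infixl \<open>$\<close> 100)

lemma detN_eq_det: "detN N M = det (mat N N (\<lambda>(i, j). M i j))"
  unfolding detN_def det_def
  by (auto simp: atLeast0LessThan permutes_in_image intro!: sum.cong prod.cong)

lemma detN_linear_in_last_column:
  assumes "0 < N"
  obtains c where "\<And>M'. (\<And>i j. i < N \<Longrightarrow> j < N - 1 \<Longrightarrow> M' i j = M i j) \<Longrightarrow>
    detN N M' = (\<Sum>i<N. M' i (N - 1) * c i)"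
proof
  let ?A = "\<lambda>M. mat N N (\<lambda>(i, j). M i j)"
  fix M' assume agree: "\<And>i j. i < N \<Longrightarrow> j < N - 1 \<Longrightarrow> M' i j = M i j"
  have "mat_delete (?A M') i (N - 1) = mat_delete (?A M) i (N - 1)" for i
    using agree by (auto simp: mat_delete_def)
  then show "detN N M' = (\<Sum>i<N. M' i (N - 1) * cofactor (?A M) i (N - 1))"
    using laplace_expansion_column[of "?A M'" N "N - 1"] assms
    by (simp add: detN_eq_det cofactor_def)
qed

lemma detN_linear_in_last_row:
  assumes "0 < N"
  obtains c where "\<And>M'. (\<And>i j. i < N - 1 \<Longrightarrow> j < N \<Longrightarrow> M' i j = M i j) \<Longrightarrow>
    detN N M' = (\<Sum>j<N. M' (N - 1) j * c j)"
proof
  let ?A = "\<lambda>M. mat N N (\<lambda>(i, j). M i j)"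
  fix M' assume agree: "\<And>i j. i < N - 1 \<Longrightarrow> j < N \<Longrightarrow> M' i j = M i j"
  have "mat_delete (?A M') (N - 1) j = mat_delete (?A M) (N - 1) j" for j
    using agree by (auto simp: mat_delete_def)
  then show "detN N M' = (\<Sum>j<N. M' (N - 1) j * cofactor (?A M) (N - 1) j)"
    using laplace_expansion_row[of "?A M'" N "N - 1"] assms
    by (simp add: detN_eq_det cofactor_def)
qed

lemma Omega_loc_linear_in_last_column:
  assumes "0 < N"
  obtains \<alpha> where "\<And>c w. Omega_loc K N P (\<lambda>j. if j < N - 1 then Q j else (c, w)) =
    (\<Sum>i<N. K (fst (P i)) c (snd (P i)) w * \<alpha> i)"
proof -
  obtain \<alpha> where \<alpha>: "\<And>M'. (\<And>i j. i < N \<Longrightarrow> j < N - 1 \<Longrightarrow>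
      M' i j = K (fst (P i)) (fst (Q j)) (snd (P i)) (snd (Q j))) \<Longrightarrow>
    detN N M' = (\<Sum>i<N. M' i (N - 1) * \<alpha> i)"
    using detN_linear_in_last_column[OF assms,
        where M = "\<lambda>i j. K (fst (P i)) (fst (Q j)) (snd (P i)) (snd (Q j))"] by blast
  show thesis
    by (rule that, unfold Omega_loc_def, subst \<alpha>) auto
qed

lemma Omega_loc_linear_in_last_row:
  assumes "0 < N"
  obtains \<beta> where "\<And>c w. Omega_loc K N (\<lambda>i. if i < N - 1 then P i else (c, w)) Q =
    (\<Sum>j<N. K c (fst (Q j)) w (snd (Q j)) * \<beta> j)"
proof -
  obtain \<beta> where \<beta>: "\<And>M'. (\<And>i j. i < N - 1 \<Longrightarrow> j < N \<Longrightarrow>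
      M' i j = K (fst (P i)) (fst (Q j)) (snd (P i)) (snd (Q j))) \<Longrightarrow>
    detN N M' = (\<Sum>j<N. M' (N - 1) j * \<beta> j)"
    using detN_linear_in_last_row[OF assms,
        where M = "\<lambda>i j. K (fst (P i)) (fst (Q j)) (snd (P i)) (snd (Q j))"] by blast
  show thesis
    by (rule that, unfold Omega_loc_def, subst \<beta>) auto
qed

text \<open>The residue \<open>c\<close> may be \<open>0\<close>: this says that \<open>f\<close> has at most a simple pole at \<open>a\<close>.\<close>

definition has_simple_pole_res :: "(complex \<Rightarrow> complex) \<Rightarrow> complex \<Rightarrow> complex \<Rightarrow> bool" where
  "has_simple_pole_res f a c \<longleftrightarrow>
     (\<exists>g. g analytic_on {a} \<and> (\<forall>\<^sub>F w in at a. f w = c / (w - a) + g w))"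

lemma has_simple_pole_res_analytic: "f analytic_on {a} \<Longrightarrow> has_simple_pole_res f a 0"
  unfolding has_simple_pole_res_def by (auto intro!: always_eventually)

lemma has_simple_pole_res_add:
  assumes "has_simple_pole_res f a c" "has_simple_pole_res g a d"
  shows "has_simple_pole_res (\<lambda>w. f w + g w) a (c + d)"
proof -
  obtain f' g' where "f' analytic_on {a}" "\<forall>\<^sub>F w in at a. f w = c / (w - a) + f' w"
    and "g' analytic_on {a}" "\<forall>\<^sub>F w in at a. g w = d / (w - a) + g' w"
    using assms unfolding has_simple_pole_res_def by meson
  then show ?thesis
    unfolding has_simple_pole_res_def
    by (intro exI[of _ "\<lambda>w. f' w + g' w"])
       (auto intro: analytic_intros elim: eventually_elim2 simp: add_divide_distrib)
qed

lemma has_simple_pole_res_sum: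
  "finite I \<Longrightarrow> (\<And>i. i \<in> I \<Longrightarrow> has_simple_pole_res (f i) a (c i)) \<Longrightarrow>
    has_simple_pole_res (\<lambda>w. \<Sum>i\<in>I. f i w) a (\<Sum>i\<in>I. c i)"
  by (induction I rule: finite_induct)
     (auto intro: has_simple_pole_res_add has_simple_pole_res_analytic)

lemma has_simple_pole_res_mult_analytic:
  assumes f: "has_simple_pole_res f a c" and h: "h analytic_on {a}"
  shows "has_simple_pole_res (\<lambda>w. f w * h w) a (c * h a)"
proof -
  obtain g where g: "g analytic_on {a}" "\<forall>\<^sub>F w in at a. f w = c / (w - a) + g w"
    using f unfolding has_simple_pole_res_def by blast
  define q where "q w = (if w = a then deriv h a else (h w - h a) / (w - a))" for w
  have "q analytic_on {a}"
  proof -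
    obtain e where "e > 0" "h holomorphic_on ball a e"
      using h unfolding analytic_on_def by blast
    then have "q holomorphic_on ball a e"
      unfolding q_def by (intro pole_lemma_open) auto
    with \<open>e > 0\<close> show ?thesis
      unfolding analytic_on_def by auto
  qed
  moreover have "\<forall>\<^sub>F w in at a. f w * h w = c * h a / (w - a) + (c * q w + g w * h w)"
    using g(2) eventually_neq_at_within[of a a UNIV]
  proof eventually_elim
    case (elim w)
    then have "w - a \<noteq> 0" and hw: "h w = h a + (w - a) * q w"
      by (simp_all add: q_def)
    then have "c * h w / (w - a) = c * h a / (w - a) + c * q w"
      unfolding hw by (simp add: distrib_left add_divide_distrib)
    then show ?case
      unfolding elim(1) by (simp add: distrib_right)
  qed
  moreover from \<open>q analytic_on {a}\<close> g(1) h
  have "(\<lambda>w. c * q w + g w * h w) analytic_on {a}"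
    by (intro analytic_intros)
  ultimately show ?thesis
    unfolding has_simple_pole_res_def by blast
qed

lemma residue_eq_if_has_simple_pole_res:
  assumes "has_simple_pole_res f a c"
  shows "residue f a = c"
proof -
  obtain g where g: "g analytic_on {a}" "\<forall>\<^sub>F w in at a. f w = c / (w - a) + g w"
    using assms unfolding has_simple_pole_res_def by blast
  obtain e where e: "e > 0" "g holomorphic_on ball a e"
    using g(1) unfolding analytic_on_def by auto
  have "residue f a = residue (\<lambda>w. c / (w - a) + g w) a"
    by (rule residue_cong[OF g(2) refl])
  also have "\<dots> = residue (\<lambda>w. c / (w - a)) a + residue g a"
    by (rule residue_add[of "ball a e"]) (use e in \<open>auto intro!: holomorphic_intros\<close>)
  also have "\<dots> = c"
    using residue_simple[of UNIV a "\<lambda>w. c"] residue_holo[of "ball a e" a g] e by simp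
  finally show ?thesis .
qed

definition fps_analytic_at :: "(complex \<Rightarrow> complex fps) \<Rightarrow> complex \<Rightarrow> bool" where
  "fps_analytic_at F a \<longleftrightarrow> (\<forall>k. (\<lambda>w. F w $ k) analytic_on {a})"

definition fps_has_simple_pole_res :: "(complex \<Rightarrow> complex fps) \<Rightarrow> complex \<Rightarrow> complex fps \<Rightarrow> bool" where
  "fps_has_simple_pole_res F a C \<longleftrightarrow> (\<forall>k. has_simple_pole_res (\<lambda>w. F w $ k) a (C $ k))"

lemma fps_analytic_at_const: "fps_analytic_at (\<lambda>w. c) a"
  by (simp add: fps_analytic_at_def)

lemma fps_analytic_at_mult:
  "fps_analytic_at F a \<Longrightarrow> fps_analytic_at G a \<Longrightarrow> fps_analytic_at (\<lambda>w. F w * G w) a"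
  unfolding fps_analytic_at_def fps_mult_nth by (auto intro!: analytic_intros)

lemma fps_analytic_at_sum:
  "(\<And>i. i \<in> I \<Longrightarrow> fps_analytic_at (F i) a) \<Longrightarrow> fps_analytic_at (\<lambda>w. \<Sum>i\<in>I. F i w) a"
  unfolding fps_analytic_at_def fps_sum_nth by (auto intro!: analytic_intros)

lemma fps_has_simple_pole_res_analytic:
  "fps_analytic_at F a \<Longrightarrow> fps_has_simple_pole_res F a 0"
  unfolding fps_analytic_at_def fps_has_simple_pole_res_def
  by (simp add: has_simple_pole_res_analytic)

lemma fps_has_simple_pole_res_add:
  "fps_has_simple_pole_res F a C \<Longrightarrow> fps_has_simple_pole_res G a D \<Longrightarrow>
    fps_has_simple_pole_res (\<lambda>w. F w + G w) a (C + D)"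
  unfolding fps_has_simple_pole_res_def by (simp add: has_simple_pole_res_add)

lemma fps_has_simple_pole_res_mult_analytic:
  "fps_has_simple_pole_res F a C \<Longrightarrow> fps_analytic_at G a \<Longrightarrow>
    fps_has_simple_pole_res (\<lambda>w. F w * G w) a (C * G a)"
  unfolding fps_has_simple_pole_res_def fps_analytic_at_def fps_mult_nth
  by (auto intro!: has_simple_pole_res_sum has_simple_pole_res_mult_analytic)

lemma fps_residue_eq_if_has_simple_pole_res:
  "fps_has_simple_pole_res F a C \<Longrightarrow> fps_residue F a = C"
  unfolding fps_has_simple_pole_res_def fps_residue_def
  by (simp add: residue_eq_if_has_simple_pole_res fps_eq_iff)

lemma holo2_analytic_on_fst:
  assumes "holo2 f W" "(x, y) \<in> W"
  shows "(\<lambda>w. f w y) analytic_on {x}"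
proof -
  obtain e where "e > 0" and ball: "ball (x, y) e \<subseteq> W"
    using assms openE unfolding holo2_def by meson
  have "(\<lambda>w. f w y) field_differentiable at w" if "w \<in> ball x e" for w
  proof -
    from that ball have "(w, y) \<in> W"
      by (auto simp: dist_Pair_Pair)
    with assms(1) show ?thesis
      unfolding holo2_def by auto
  qed
  then have "(\<lambda>w. f w y) holomorphic_on ball x e"
    by (meson field_differentiable_at_within holomorphic_on_def)
  with \<open>e > 0\<close> show ?thesis
    unfolding analytic_on_def by auto
qed

lemma holo2_analytic_on_snd:
  assumes "holo2 f W" "(x, y) \<in> W"
  shows "(\<lambda>w. f x w) analytic_on {y}"
proof -
  obtain e where "e > 0" and ball: "ball (x, y) e \<subseteq> W"
    using assms openE unfolding holo2_def by meson
  have "(\<lambda>w. f x w) field_differentiable at w" if "w \<in> ball y e" for w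
  proof -
    from that ball have "(x, w) \<in> W"
      by (auto simp: dist_Pair_Pair)
    with assms(1) show ?thesis
      unfolding holo2_def by auto
  qed
  then have "(\<lambda>w. f x w) holomorphic_on ball y e"
    by (meson field_differentiable_at_within holomorphic_on_def)
  with \<open>e > 0\<close> show ?thesis
    unfolding analytic_on_def by auto
qed

lemma eventually_at_pairs_in_open:
  assumes "open W" "(a, a) \<in> W"
  shows "\<forall>\<^sub>F w in at a. (a, w) \<in> W \<and> (w, a) \<in> W"
proof -
  have "((\<lambda>w. (a, w)) \<longlongrightarrow> (a, a)) (at a)" "((\<lambda>w. (w, a)) \<longlongrightarrow> (a, a)) (at a)"
    by (auto intro!: tendsto_eq_intros)
  then show ?thesis
    by (intro eventually_conj topological_tendstoD[OF _ assms])
qed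

definition fps_cauchy_kernel_at :: "(complex \<Rightarrow> complex \<Rightarrow> complex fps) \<Rightarrow> complex \<Rightarrow> bool" where
  "fps_cauchy_kernel_at F a \<longleftrightarrow> (\<forall>k. \<exists>W h. (a, a) \<in> W \<and> holo2 h W \<and>
     (\<forall>(w1, w2)\<in>W. w1 \<noteq> w2 \<longrightarrow> F w1 w2 $ k = (if k = 0 then 1 / (w1 - w2) else 0) + h w1 w2))"

lemma fps_cauchy_kernel_at_simple_poles:
  assumes "fps_cauchy_kernel_at F a"
  shows "fps_has_simple_pole_res (\<lambda>w. F a w) a (-1)" "fps_has_simple_pole_res (\<lambda>w. F w a) a 1"
proof -
  have "has_simple_pole_res (\<lambda>w. F a w $ k) a ((-1) $ k) \<and>
        has_simple_pole_res (\<lambda>w. F w a $ k) a (1 $ k)" for k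
  proof -
    obtain W h where W: "(a, a) \<in> W" "holo2 h W" and F:
      "\<forall>(w1, w2)\<in>W. w1 \<noteq> w2 \<longrightarrow> F w1 w2 $ k = (if k = 0 then 1 / (w1 - w2) else 0) + h w1 w2"
      using assms unfolding fps_cauchy_kernel_at_def by blast
    have "\<forall>\<^sub>F w in at a. (a, w) \<in> W \<and> (w, a) \<in> W"
      by (rule eventually_at_pairs_in_open) (use W in \<open>auto simp: holo2_def\<close>)
    then have "\<forall>\<^sub>F w in at a.
        F a w $ k = (-1) $ k / (w - a) + h a w \<and> F w a $ k = 1 $ k / (w - a) + h w a"
      using eventually_neq_at_within[of a a UNIV]
    proof eventually_elim
      case (elim w)
      have "1 / (a - w) = - 1 / (w - a)"
        by (metis minus_diff_eq divide_minus_left divide_minus_right)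
      with elim F show ?case
        by auto
    qed
    moreover have "(\<lambda>w. h a w) analytic_on {a}" "(\<lambda>w. h w a) analytic_on {a}"
      using holo2_analytic_on_snd[OF W(2,1)] holo2_analytic_on_fst[OF W(2,1)] by auto
    ultimately show ?thesis
      unfolding has_simple_pole_res_def eventually_conj_iff by blast
  qed
  then show "fps_has_simple_pole_res (\<lambda>w. F a w) a (-1)" "fps_has_simple_pole_res (\<lambda>w. F w a) a 1"
    unfolding fps_has_simple_pole_res_def by auto
qed

lemma fps_analytic_at_if_regular2_at:
  fixes F :: "complex \<Rightarrow> complex \<Rightarrow> complex fps"
  assumes "\<And>k. regular2_at (\<lambda>w1 w2. F w1 w2 $ k) (x, y)"
  shows "fps_analytic_at (\<lambda>w. F w y) x" "fps_analytic_at (\<lambda>w. F x w) y"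
proof -
  have "(\<lambda>w. F w y $ k) analytic_on {x} \<and> (\<lambda>w. F x w $ k) analytic_on {y}" for k
  proof -
    obtain W where "(x, y) \<in> W" "holo2 (\<lambda>w1 w2. F w1 w2 $ k) W"
      using assms unfolding regular2_at_def by blast
    from holo2_analytic_on_fst[OF this(2,1)] holo2_analytic_on_snd[OF this(2,1)] show ?thesis
      by simp
  qed
  then show "fps_analytic_at (\<lambda>w. F w y) x" "fps_analytic_at (\<lambda>w. F x w) y"
    unfolding fps_analytic_at_def by auto
qed

lemma KP_kernel_cauchy_kernel_at:
  "KP_kernel A s K \<Longrightarrow> c \<in> A \<Longrightarrow> p \<in> fst c \<Longrightarrow> fps_cauchy_kernel_at (K c c) (snd c p)"
  unfolding KP_kernel_def fps_cauchy_kernel_at_def by blast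

text \<open>\<open>\<kappa> p q\<close> is the local expression of a kernel in charts attached to the points \<open>p\<close> and \<open>q\<close>,
  and \<open>x p\<close> is the coordinate of \<open>p\<close> in its chart.\<close>

context
  fixes \<kappa> :: "'p \<Rightarrow> 'p \<Rightarrow> complex \<Rightarrow> complex \<Rightarrow> complex fps"
    and x :: "'p \<Rightarrow> complex"
    and Z :: "'p set"
  assumes kernel_regular:
      "\<And>p q k. p \<in> Z \<Longrightarrow> q \<in> Z \<Longrightarrow> p \<noteq> q \<Longrightarrow> regular2_at (\<lambda>w1 w2. \<kappa> p q w1 w2 $ k) (x p, x q)"
    and kernel_diagonal: "\<And>q. q \<in> Z \<Longrightarrow> fps_cauchy_kernel_at (\<kappa> q q) (x q)"
begin

lemma kernel_analytic_in_second:
  "p \<in> Z \<Longrightarrow> q \<in> Z \<Longrightarrow> p \<noteq> q \<Longrightarrow> fps_analytic_at (\<lambda>w. \<kappa> p q (x p) w) (x q)"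
  by (rule fps_analytic_at_if_regular2_at(2), rule kernel_regular)

lemma kernel_analytic_in_first:
  "p \<in> Z \<Longrightarrow> q \<in> Z \<Longrightarrow> p \<noteq> q \<Longrightarrow> fps_analytic_at (\<lambda>w. \<kappa> q p w (x p)) (x q)"
  by (rule fps_analytic_at_if_regular2_at(1), rule kernel_regular) auto

lemma kernel_column_combination_analytic:
  assumes "a ` I \<subseteq> Z" "q \<in> Z" "q \<notin> a ` I"
  shows "fps_analytic_at (\<lambda>w. \<Sum>i\<in>I. \<kappa> (a i) q (x (a i)) w * \<alpha> i) (x q)"
  using assms
  by (intro fps_analytic_at_sum fps_analytic_at_mult fps_analytic_at_const kernel_analytic_in_second)
     auto

lemma kernel_row_combination_analytic:
  assumes "b ` J \<subseteq> Z" "q \<in> Z" "q \<notin> b ` J"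
  shows "fps_analytic_at (\<lambda>w. \<Sum>j\<in>J. \<kappa> q (b j) w (x (b j)) * \<beta> j) (x q)"
  using assms
  by (intro fps_analytic_at_sum fps_analytic_at_mult fps_analytic_at_const kernel_analytic_in_first)
     auto

lemma kernel_column_combination_pole:
  assumes "finite I" "a ` I \<subseteq> Z" "inj_on a I" "i0 \<in> I"
  shows "fps_has_simple_pole_res (\<lambda>w. \<Sum>i\<in>I. \<kappa> (a i) (a i0) (x (a i)) w * \<alpha> i)
           (x (a i0)) (- \<alpha> i0)"
proof -
  have "fps_has_simple_pole_res (\<lambda>w. \<kappa> (a i0) (a i0) (x (a i0)) w * \<alpha> i0) (x (a i0)) (-1 * \<alpha> i0)"
    using assms kernel_diagonal
    by (intro fps_has_simple_pole_res_mult_analytic fps_cauchy_kernel_at_simple_poles(1)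
        fps_analytic_at_const) auto
  moreover have "fps_has_simple_pole_res
      (\<lambda>w. \<Sum>i\<in>I - {i0}. \<kappa> (a i) (a i0) (x (a i)) w * \<alpha> i) (x (a i0)) 0"
    using assms
    by (intro fps_has_simple_pole_res_analytic kernel_column_combination_analytic)
       (auto simp: inj_on_image_mem_iff)
  ultimately show ?thesis
    using fps_has_simple_pole_res_add assms by (fastforce simp: sum.remove)
qed

lemma kernel_row_combination_pole:
  assumes "finite J" "b ` J \<subseteq> Z" "inj_on b J" "j0 \<in> J"
  shows "fps_has_simple_pole_res (\<lambda>w. \<Sum>j\<in>J. \<kappa> (b j0) (b j) w (x (b j)) * \<beta> j)
           (x (b j0)) (\<beta> j0)"
proof -
  have "fps_has_simple_pole_res (\<lambda>w. \<kappa> (b j0) (b j0) w (x (b j0)) * \<beta> j0) (x (b j0)) (1 * \<beta> j0)"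
    using assms kernel_diagonal
    by (intro fps_has_simple_pole_res_mult_analytic fps_cauchy_kernel_at_simple_poles(2)
        fps_analytic_at_const) auto
  moreover have "fps_has_simple_pole_res
      (\<lambda>w. \<Sum>j\<in>J - {j0}. \<kappa> (b j0) (b j) w (x (b j)) * \<beta> j) (x (b j0)) 0"
    using assms
    by (intro fps_has_simple_pole_res_analytic kernel_row_combination_analytic)
       (auto simp: inj_on_image_mem_iff)
  ultimately show ?thesis
    using fps_has_simple_pole_res_add assms by (fastforce simp: sum.remove)
qed

theorem sum_residues_kernel_combinations_product_eq_0:
  assumes "finite Z" "finite I" "finite J" "a ` I \<subseteq> Z" "b ` J \<subseteq> Z"
    and "inj_on a I" "inj_on b J" "a ` I \<inter> b ` J = {}"
  shows "(\<Sum>q\<in>Z. fps_residue (\<lambda>w. (\<Sum>i\<in>I. \<kappa> (a i) q (x (a i)) w * \<alpha> i) *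
                                (\<Sum>j\<in>J. \<kappa> q (b j) w (x (b j)) * \<beta> j)) (x q)) = 0"
proof -
  define F where "F q w = (\<Sum>i\<in>I. \<kappa> (a i) q (x (a i)) w * \<alpha> i)" for q w
  define G where "G q w = (\<Sum>j\<in>J. \<kappa> q (b j) w (x (b j)) * \<beta> j)" for q w
  define R where "R q = fps_residue (\<lambda>w. F q w * G q w) (x q)" for q
  define k where "k i j = \<kappa> (a i) (b j) (x (a i)) (x (b j))" for i j
  have R_column: "R (a i) = - \<alpha> i * (\<Sum>j\<in>J. k i j * \<beta> j)" if "i \<in> I" for i
  proof -
    have "a i \<notin> b ` J" "a i \<in> Z"
      using assms that by auto
    then have "fps_has_simple_pole_res (\<lambda>w. F (a i) w * G (a i) w) (x (a i)) (- \<alpha> i * G (a i) (x (a i)))"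
      unfolding F_def G_def using assms that
      by (intro fps_has_simple_pole_res_mult_analytic kernel_column_combination_pole
          kernel_row_combination_analytic)
    then show ?thesis
      unfolding R_def by (simp add: fps_residue_eq_if_has_simple_pole_res G_def k_def)
  qed
  have R_row: "R (b j) = \<beta> j * (\<Sum>i\<in>I. k i j * \<alpha> i)" if "j \<in> J" for j
  proof -
    have "b j \<notin> a ` I" "b j \<in> Z"
      using assms that by auto
    then have "fps_has_simple_pole_res (\<lambda>w. G (b j) w * F (b j) w) (x (b j)) (\<beta> j * F (b j) (x (b j)))"
      unfolding F_def G_def using assms that
      by (intro fps_has_simple_pole_res_mult_analytic kernel_row_combination_pole
          kernel_column_combination_analytic)
    then show ?thesis
      unfolding R_def by (simp add: fps_residue_eq_if_has_simple_pole_res F_def k_def mult.commute)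
  qed
  have R_regular: "R q = 0" if "q \<in> Z - (a ` I \<union> b ` J)" for q
    unfolding R_def F_def G_def using assms that
    by (intro fps_residue_eq_if_has_simple_pole_res fps_has_simple_pole_res_analytic
        fps_analytic_at_mult kernel_column_combination_analytic kernel_row_combination_analytic) auto
  have "(\<Sum>q\<in>Z. R q) = (\<Sum>q\<in>a ` I. R q) + (\<Sum>q\<in>b ` J. R q)"
    using assms R_regular
    by (simp add: sum.mono_neutral_right[of Z "a ` I \<union> b ` J"] sum.union_disjoint)
  also have "\<dots> = (\<Sum>i\<in>I. R (a i)) + (\<Sum>j\<in>J. R (b j))"
    using assms by (simp add: sum.reindex)
  also have "\<dots> = 0"
    using R_column R_row
    by (simp add: sum_distrib_left sum_negf mult_ac sum.swap[of _ I J])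
  finally show ?thesis
    unfolding R_def F_def G_def .
qed

end

theorem mainTheorem1:
  fixes A :: "'p::t2_space chart set"
    and s :: "'p chart \<Rightarrow> 'p chart \<Rightarrow> 'p \<Rightarrow> complex"
    and K :: "'p chart \<Rightarrow> 'p chart \<Rightarrow> complex \<Rightarrow> complex \<Rightarrow> complex fps"
    and ch :: "'p \<Rightarrow> 'p chart"
    and m n :: nat
    and P Pb P' Pb' :: "nat \<Rightarrow> 'p"
  assumes RS: "riemann_surface_atlas A"
    and spin: "spin_structure A s"
    and kernel: "KP_kernel A s K"
    and charts: "\<forall>p. ch p \<in> A \<and> p \<in> fst (ch p)"
    and m: "m \<ge> 1" and n: "n \<ge> 1"
    and dist: "distinct (map P [0..<m] @ map Pb [0..<m-1] @ map P' [0..<n-1] @ map Pb' [0..<n])"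
    and reg: "\<forall>q\<in>set (map P [0..<m] @ map Pb [0..<m-1] @ map P' [0..<n-1] @ map Pb' [0..<n]).
               \<forall>q'\<in>set (map P [0..<m] @ map Pb [0..<m-1] @ map P' [0..<n-1] @ map Pb' [0..<n]).
               q \<noteq> q' \<longrightarrow> (\<forall>k. regular2_at (\<lambda>w1 w2. fps_nth (K (ch q) (ch q') w1 w2) k)
                                         (snd (ch q) q, snd (ch q') q'))"
  shows "(\<Sum>q\<in>set (map P [0..<m] @ map Pb [0..<m-1] @ map P' [0..<n-1] @ map Pb' [0..<n]).
           fps_residue
             (\<lambda>w. Omega_loc K m (\<lambda>i. at_pt ch (P i))
                                 (\<lambda>j. if j < m - 1 then at_pt ch (Pb j) else (ch q, w))
                * Omega_loc K n (\<lambda>i. if i < n - 1 then at_pt ch (P' i) else (ch q, w))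
                                 (\<lambda>j. at_pt ch (Pb' j)))
             (snd (ch q) q)) = 0"
proof -
  define x where "x p = snd (ch p) p" for p
  define \<kappa> where "\<kappa> p q = K (ch p) (ch q)" for p q
  define Z where "Z = set (map P [0..<m] @ map Pb [0..<m-1] @ map P' [0..<n-1] @ map Pb' [0..<n])"
  obtain \<alpha> where \<alpha>: "\<And>c w. Omega_loc K m (\<lambda>i. at_pt ch (P i))
      (\<lambda>j. if j < m - 1 then at_pt ch (Pb j) else (c, w)) = (\<Sum>i<m. K (ch (P i)) c (x (P i)) w * \<alpha> i)"
    using Omega_loc_linear_in_last_column[where N = m and K = K and P = "\<lambda>i. at_pt ch (P i)"
        and Q = "\<lambda>j. at_pt ch (Pb j)"] m
    unfolding at_pt_def x_def by auto
  obtain \<beta> where \<beta>: "\<And>c w. Omega_loc K n (\<lambda>i. if i < n - 1 then at_pt ch (P' i) else (c, w))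
      (\<lambda>j. at_pt ch (Pb' j)) = (\<Sum>j<n. K c (ch (Pb' j)) w (x (Pb' j)) * \<beta> j)"
    using Omega_loc_linear_in_last_row[where N = n and K = K and P = "\<lambda>i. at_pt ch (P' i)"
        and Q = "\<lambda>j. at_pt ch (Pb' j)"] n
    unfolding at_pt_def x_def by auto
  have "(\<Sum>q\<in>Z. fps_residue (\<lambda>w. (\<Sum>i<m. \<kappa> (P i) q (x (P i)) w * \<alpha> i) *
      (\<Sum>j<n. \<kappa> q (Pb' j) w (x (Pb' j)) * \<beta> j)) (x q)) = 0"
  proof (rule sum_residues_kernel_combinations_product_eq_0)
    show "regular2_at (\<lambda>w1 w2. \<kappa> p q w1 w2 $ k) (x p, x q)" if "p \<in> Z" "q \<in> Z" "p \<noteq> q" for p q k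
      using reg that unfolding Z_def \<kappa>_def x_def by blast
    show "fps_cauchy_kernel_at (\<kappa> q q) (x q)" for q
      using KP_kernel_cauchy_kernel_at[OF kernel] charts unfolding \<kappa>_def x_def by blast
  qed (use dist in \<open>auto simp: Z_def distinct_map atLeast0LessThan\<close>)
  then show ?thesis
    unfolding Z_def \<alpha> \<beta> \<kappa>_def x_def .
qed

end
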